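(* Let $(X,\mu)$ be a non-atomic probability measure space equipped with a tree $\mathcal{T}$, with associated dyadic maximal operator $\mathcal{M}_{\mathcal{T}}$. Let $0<q<1$, let $f,h$ satisfy $0<h\le f^q$, and let $\phi_n:X\to\mathbb{R}^+$ ($n\in\mathbb{N}$) be measurable functions with $\int_X\phi_n\,d\mu=f$ and $\int_X\phi_n^q\,d\mu=h$ for every $n$. Let $c=\omega_q(f^q/h)^{1/q}$. Then the following are equivalent: (i) $\lim_n\int_X(\mathcal{M}_{\mathcal{T}}\phi_n)^q\,d\mu=h\,\omega_q(f^q/h)$; (ii) $\lim_n\int_X|\mathcal{M}_{\mathcal{T}}\phi_n-c\,\phi_n|^q\,d\mu=0$.
   Context: A set $\mathcal{T}$ of measurable subsets of $X$ is a tree if: (i) $X\in\mathcal{T}$ and $\mu(I)>0$ for every $I\in\mathcal{T}$; (ii) for every $I\in\mathcal{T}$ there is a finite or countable set $C(I)\subseteq\mathcal{T}$ with at least two elements, consisting of pairwise disjoint subsets of $I$ whose union is $I$; (iii) $\mathcal{T}=\bigcup_{m\ge0}\mathcal{T}_{(m)}$ where $\mathcal{T}_{(0)}=\{X\}$ and $\mathcal{T}_{(m+1)}=\bigcup_{I\in\mathcal{T}_{(m)}}C(I)$; (iv) $\lim_{m\to\infty}\sup_{I\in\mathcal{T}_{(m)}}\mu(I)=0$. The dyadic maximal operator is $\mathcal{M}_{\mathcal{T}}\phi(x)=\sup\{\frac{1}{\mu(I)}\int_I|\phi|\,d\mu : x\in I\in\mathcal{T}\}$. Here $\omega_q(z)=[H_q^{-1}(z)]^q$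 for $z\ge1$, where $H_q(z)=(1-q)z^q+qz^{q-1}$ on $[1,\infty)$ (a strictly increasing bijection onto $[1,\infty)$). *)

theory Defs
  imports "HOL-Probability.Probability"
begin

definition non_atomic :: "'a measure \<Rightarrow> bool" where
  "non_atomic M \<longleftrightarrow> (\<forall>A\<in>sets M. 0 < measure M A \<longrightarrow>
      (\<exists>B\<in>sets M. B \<subseteq> A \<and> 0 < measure M B \<and> measure M B < measure M A))"

definition tree_level :: "'a measure \<Rightarrow> ('a set \<Rightarrow> 'a set set) \<Rightarrow> nat \<Rightarrow> 'a set set" where
  "tree_level M C m = ((\<lambda>S. \<Union>I\<in>S. C I) ^^ m) {space M}"

definition is_tree :: "'a measure \<Rightarrow> 'a set set \<Rightarrow> bool" where
  "is_tree M T \<longleftrightarrow> T \<subseteq> sets M \<and> space M \<in> T \<and> (\<forall>I\<in>T. 0 < measure M I) \<and>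
    (\<exists>C. (\<forall>I\<in>T. C I \<subseteq> T \<and> countable (C I) \<and> (\<exists>J\<in>C I. \<exists>K\<in>C I. J \<noteq> K) \<and>
              disjoint (C I) \<and> \<Union>(C I) = I) \<and>
         T = (\<Union>m. tree_level M C m) \<and>
         (\<lambda>m. SUP I\<in>tree_level M C m. measure M I) \<longlonglongrightarrow> 0)"

definition dyadic_max :: "'a measure \<Rightarrow> 'a set set \<Rightarrow> ('a \<Rightarrow> real) \<Rightarrow> 'a \<Rightarrow> ennreal" where
  "dyadic_max M T \<phi> x = (SUP I\<in>{I\<in>T. x \<in> I}. (\<integral>\<^sup>+ y\<in>I. ennreal \<bar>\<phi> y\<bar> \<partial>M) / emeasure M I)"

definition epowr :: "ennreal \<Rightarrow> real \<Rightarrow> ennreal" where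
  "epowr t q = (if t = \<infinity> then \<infinity> else ennreal (enn2real t powr q))"

definition H_fun :: "real \<Rightarrow> real \<Rightarrow> real" where
  "H_fun q z = (1 - q) * z powr q + q * z powr (q - 1)"

definition H_inv :: "real \<Rightarrow> real \<Rightarrow> real" where
  "H_inv q z = (THE y. 1 \<le> y \<and> H_fun q y = z)"

definition omega :: "real \<Rightarrow> real \<Rightarrow> real" where
  "omega q z = (H_inv q z) powr q"

end

theory Submission
  imports Defs
begin

text \<open>Let \<open>F\<close> be the dyadic maximal function of \<open>\<phi>\<close> and \<open>y = \<omega>\<^sub>q(f\<^sup>q/h)\<^sup>1\<^sup>/\<^sup>q\<close>,
  so that \<open>f\<^sup>q = h H\<^sub>q(y)\<close>. Comparing \<open>\<phi>\<close> with the tangent line of \<open>t\<^sup>q\<close> at the truncations of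
  \<open>F\<close> to the first \<open>m\<close> levels, and using that each truncation is constant on the cells of the
  next level, yields the Bellman-type bound \<open>(1 - q) \<integral>F\<^sup>q + q \<integral>\<phi> F\<^sup>q\<^sup>-\<^sup>1 \<le> f\<^sup>q\<close>.
  Since the tangent gap \<open>1 - q + q r - r\<^sup>q\<close> controls \<open>|1 - r|\<^sup>q\<close> away from \<open>r = 1\<close>, applying it
  with \<open>r = y \<phi> / F\<close> shows that \<open>\<integral>|F - y \<phi>|\<^sup>q\<close> is small once \<open>\<integral>F\<^sup>q\<close> is close to
  \<open>h y\<^sup>q = h \<omega>\<^sub>q(f\<^sup>q/h)\<close>; the converse is \<open>|a\<^sup>q - b\<^sup>q| \<le> |a - b|\<^sup>q\<close>.\<close>

section \<open>Inequalities for powers with exponent in \<open>(0, 1)\<close>\<close>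

lemma powr_le_tangent:
  fixes q r s :: real
  assumes q: "0 < q" "q < 1" and "0 \<le> r" "0 < s"
  shows "r powr q \<le> (1 - q) * s powr q + q * r * s powr (q - 1)"
proof -
  have "r powr q * s powr (1 - q) \<le> q * r + (1 - q) * s"
    using Youngs_inequality_0[of q "1 - q" r s] assms by (cases "r = 0") auto
  then have "r powr q * s powr (1 - q) * s powr (q - 1) \<le> (q * r + (1 - q) * s) * s powr (q - 1)"
    by (rule mult_right_mono) simp
  moreover have "s powr (1 - q) * s powr (q - 1) = 1" "s * s powr (q - 1) = s powr q"
    using \<open>0 < s\<close> powr_add[of s 1 "q - 1"] by (simp_all flip: powr_add)
  ultimately show ?thesis by (simp add: algebra_simps)
qed

lemma powr_tangent_max_le:
  fixes q L a :: real
  assumes q: "0 < q" "q < 1" and "0 < L" "0 \<le> a"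
  shows "(1 - q) * max L a powr q + q * a * max L a powr (q - 1)
           \<le> (1 - q) * L powr q + q * a * L powr (q - 1)"
proof (cases "a \<le> L")
  case False
  then have "0 < a" using \<open>0 < L\<close> by linarith
  then have "(1 - q) * a powr q + q * a * a powr (q - 1) = a powr q"
    using powr_add[of a 1 "q - 1"] by (simp add: algebra_simps)
  then show ?thesis using False powr_le_tangent[OF q \<open>0 \<le> a\<close> \<open>0 < L\<close>] by simp
qed simp

lemma powr_add_le:
  fixes q s t :: real
  assumes "0 < q" "q \<le> 1" "0 \<le> s" "0 \<le> t"
  shows "(s + t) powr q \<le> s powr q + t powr q"
proof (cases "s + t = 0")
  case False
  then have st: "0 < s + t" using assms by linarith
  have *: "(s + t) powr q * (u / (s + t)) \<le> u powr q" if "0 \<le> u" "u \<le> s + t" for u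
  proof -
    have "u / (s + t) \<le> (u / (s + t)) powr q"
      using powr_mono'[of q 1 "u / (s + t)"] that st assms by simp
    then have "(s + t) powr q * (u / (s + t)) \<le> (s + t) powr q * (u / (s + t)) powr q"
      by (rule mult_left_mono) simp
    also have "\<dots> = u powr q" using st that by (simp add: powr_divide)
    finally show ?thesis .
  qed
  have "(s + t) powr q = (s + t) powr q * (s / (s + t)) + (s + t) powr q * (t / (s + t))"
    using st by (simp flip: distrib_left add_divide_distrib)
  also have "\<dots> \<le> s powr q + t powr q"
    using *[of s] *[of t] assms by (intro add_mono) auto
  finally show ?thesis .
qed (use assms in auto)

lemma abs_powr_diff_le:
  fixes q a b :: real
  assumes "0 < q" "q \<le> 1" "0 \<le> a" "0 \<le> b"
  shows "\<bar>a powr q - b powr q\<bar> \<le> \<bar>a - b\<bar> powr q"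
proof -
  have *: "\<bar>u powr q - v powr q\<bar> \<le> \<bar>u - v\<bar> powr q" if "0 \<le> v" "v \<le> u" for u v
    using powr_add_le[of q v "u - v"] powr_mono2[of q v u] that assms by auto
  show ?thesis
    using *[of b a] *[of a b] assms by (cases "b \<le> a") (auto simp: abs_minus_commute)
qed

definition tangent_gap :: "real \<Rightarrow> real \<Rightarrow> real" where
  "tangent_gap q r = 1 - q + q * r - r powr q"

lemma tangent_gap_nonneg: "0 < q \<Longrightarrow> q < 1 \<Longrightarrow> 0 \<le> r \<Longrightarrow> 0 \<le> tangent_gap q r"
  using powr_le_tangent[of q r 1] by (simp add: tangent_gap_def)

lemma tangent_gap_convex:
  fixes q r s :: real
  assumes "0 < q" "q < 1" "0 \<le> r" "0 < s"
  shows "tangent_gap q s + q * (1 - s powr (q - 1)) * (r - s) \<le> tangent_gap q r"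
  using powr_le_tangent[OF assms] powr_add[of s 1 "q - 1"] assms
  by (simp add: tangent_gap_def algebra_simps)

text \<open>Near \<open>r = 1\<close> the bound is \<open>\<delta>\<^sup>q\<close>; away from it the gap grows at least linearly,
  which dominates \<open>|1 - r|\<^sup>q\<close> on the right and the constant \<open>1\<close> on the left.\<close>
lemma tangent_gap_stability:
  fixes q \<delta> :: real
  assumes q: "0 < q" "q < 1" and \<delta>: "0 < \<delta>" "\<delta> < 1"
  shows "\<exists>\<kappa>>0. \<forall>r\<ge>0. \<bar>1 - r\<bar> powr q \<le> \<delta> powr q + tangent_gap q r / \<kappa>"
proof -
  define s1 where "s1 = 1 + \<delta> / 2"
  define s2 where "s2 = 1 - \<delta> / 2"
  define \<beta>1 where "\<beta>1 = q * (1 - s1 powr (q - 1))"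
  define \<beta>2 where "\<beta>2 = q * (s2 powr (q - 1) - 1)"
  have s1: "1 < s1" and s2: "0 < s2" "s2 < 1" using \<delta> by (auto simp: s1_def s2_def)
  have "0 < \<beta>1" unfolding \<beta>1_def using powr_less_one[OF s1, of "q - 1"] q by simp
  have "1 < (1 / s2) powr (1 - q)" using s2 q by (intro gr_one_powr) auto
  then have "0 < \<beta>2"
    using s2 q by (simp add: \<beta>2_def powr_divide powr_minus_divide[symmetric] flip: powr_minus)
  define \<kappa> where "\<kappa> = min (\<beta>1 * \<delta> powr (1 - q) / 2) (\<beta>2 * \<delta> / 2)"
  have "0 < \<kappa>" using \<open>0 < \<beta>1\<close> \<open>0 < \<beta>2\<close> \<delta> by (simp add: \<kappa>_def)
  have "\<bar>1 - r\<bar> powr q \<le> \<delta> powr q + tangent_gap q r / \<kappa>" if r: "0 \<le> r" for r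
  proof -
    have gap: "0 \<le> tangent_gap q r / \<kappa>" using tangent_gap_nonneg[OF q r] \<open>0 < \<kappa>\<close> by simp
    consider "\<bar>1 - r\<bar> < \<delta>" | "1 + \<delta> \<le> r" | "r \<le> 1 - \<delta>" by linarith
    then show ?thesis
    proof cases
      case 1
      then have "\<bar>1 - r\<bar> powr q \<le> \<delta> powr q" using q by (intro powr_mono2) auto
      then show ?thesis using gap by linarith
    next
      case 2
      have "\<beta>1 * (r - s1) \<le> tangent_gap q r"
        using tangent_gap_convex[OF q r, of s1] tangent_gap_nonneg[OF q, of s1] s1
        by (simp add: \<beta>1_def)
      moreover have "\<beta>1 * ((r - 1) / 2) \<le> \<beta>1 * (r - s1)"
        using \<open>0 < \<beta>1\<close> 2 by (intro mult_left_mono) (auto simp: s1_def)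
      moreover have "\<bar>1 - r\<bar> powr q * \<delta> powr (1 - q) \<le> (r - 1) powr q * (r - 1) powr (1 - q)"
        using 2 \<delta> q by (simp add: abs_if mult_left_mono powr_mono2)
      moreover have "(r - 1) powr q * (r - 1) powr (1 - q) = r - 1"
        using 2 \<delta> by (simp flip: powr_add)
      ultimately have "\<beta>1 * (\<bar>1 - r\<bar> powr q * \<delta> powr (1 - q)) / 2 \<le> tangent_gap q r"
        using \<open>0 < \<beta>1\<close> mult_left_mono[of "\<bar>1 - r\<bar> powr q * \<delta> powr (1 - q)" "r - 1" \<beta>1]
        by linarith
      moreover have "\<kappa> * \<bar>1 - r\<bar> powr q \<le> \<beta>1 * \<delta> powr (1 - q) / 2 * \<bar>1 - r\<bar> powr q"
        unfolding \<kappa>_def by (intro mult_right_mono) auto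
      ultimately have "\<bar>1 - r\<bar> powr q \<le> tangent_gap q r / \<kappa>"
        using \<open>0 < \<kappa>\<close> by (simp add: field_simps)
      then show ?thesis using powr_ge_zero[of \<delta> q] by linarith
    next
      case 3
      have "\<beta>2 * (s2 - r) \<le> tangent_gap q r"
        using tangent_gap_convex[OF q r, of s2] tangent_gap_nonneg[OF q, of s2] s2
        by (simp add: \<beta>2_def algebra_simps)
      moreover have "\<beta>2 * (\<delta> / 2) \<le> \<beta>2 * (s2 - r)"
        using \<open>0 < \<beta>2\<close> 3 by (intro mult_left_mono) (auto simp: s2_def)
      ultimately have "1 \<le> tangent_gap q r / \<kappa>"
        using \<open>0 < \<kappa>\<close> by (simp add: \<kappa>_def field_simps)
      moreover have "\<bar>1 - r\<bar> powr q \<le> 1"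
        using 3 r \<delta> q powr_mono2[of q "\<bar>1 - r\<bar>" 1] by auto
      ultimately show ?thesis by (smt (verit) powr_ge_zero)
    qed
  qed
  then show ?thesis using \<open>0 < \<kappa>\<close> by blast
qed

lemma abs_diff_powr_le_tangent_gap:
  fixes q \<delta> \<kappa> m p :: real
  assumes q: "0 < q" "q < 1" and "0 < m" "0 \<le> p" "0 < \<kappa>"
    and stab: "\<forall>r\<ge>0. \<bar>1 - r\<bar> powr q \<le> \<delta> powr q + tangent_gap q r / \<kappa>"
  shows "\<bar>m - p\<bar> powr q
           \<le> \<delta> powr q * m powr q + ((1 - q) * m powr q + q * p * m powr (q - 1) - p powr q) / \<kappa>"
proof -
  define r where "r = p / m"
  have "0 \<le> r" using assms by (simp add: r_def)
  have "\<bar>m - p\<bar> = m * \<bar>1 - r\<bar>"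
    using \<open>0 < m\<close> by (simp add: r_def field_simps flip: abs_mult)
  then have "\<bar>m - p\<bar> powr q = m powr q * \<bar>1 - r\<bar> powr q"
    using \<open>0 < m\<close> by (simp add: powr_mult)
  also have "\<dots> \<le> m powr q * (\<delta> powr q + tangent_gap q r / \<kappa>)"
    using stab \<open>0 \<le> r\<close> by (intro mult_left_mono) auto
  also have "\<dots> = \<delta> powr q * m powr q + m powr q * tangent_gap q r / \<kappa>"
    by (simp add: algebra_simps)
  also have "m powr q * tangent_gap q r = (1 - q) * m powr q + q * p * m powr (q - 1) - p powr q"
    using \<open>0 < m\<close> \<open>0 \<le> p\<close>
    by (simp add: tangent_gap_def r_def powr_diff powr_divide field_simps)
  finally show ?thesis .
qed

section \<open>The function \<open>H\<^sub>q\<close>\<close>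

lemma H_fun_strict_mono:
  fixes q s t :: real
  assumes q: "0 < q" "q < 1" and "1 \<le> s" "s < t"
  shows "H_fun q s < H_fun q t"
proof -
  let ?H' = "\<lambda>x. (1 - q) * (q * x powr (q - 1)) + q * ((q - 1) * x powr (q - 1 - 1))"
  have H': "DERIV (H_fun q) x :> ?H' x" if "s \<le> x" "x \<le> t" for x
    using that \<open>1 \<le> s\<close> unfolding H_fun_def by (auto intro!: derivative_eq_intros)
  obtain z where z: "s < z" "z < t" "H_fun q t - H_fun q s = (t - s) * ?H' z"
    using MVT2[OF \<open>s < t\<close> H'] by blast
  have "z powr (q - 1) = z * z powr (q - 1 - 1)"
    using z \<open>1 \<le> s\<close> powr_add[of z 1 "q - 1 - 1"] by simp
  then have "?H' z = q * (1 - q) * (z - 1) * z powr (q - 1 - 1)"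
    by (simp add: algebra_simps)
  also have "\<dots> > 0" using q z \<open>1 \<le> s\<close> by simp
  finally show ?thesis using z(3) \<open>s < t\<close> by (smt (verit) mult_pos_pos)
qed

lemma H_fun_bij:
  fixes q z :: real
  assumes q: "0 < q" "q < 1" and "1 \<le> z"
  shows "\<exists>!y. 1 \<le> y \<and> H_fun q y = z"
proof -
  define b where "b = max 1 ((z / (1 - q)) powr (1 / q))"
  have "z / (1 - q) = ((z / (1 - q)) powr (1 / q)) powr q"
    using q \<open>1 \<le> z\<close> by (simp add: powr_powr)
  also have "\<dots> \<le> b powr q" using q by (intro powr_mono2) (auto simp: b_def)
  finally have "z \<le> (1 - q) * b powr q" using q by (simp add: field_simps)
  then have "z \<le> H_fun q b" using q by (simp add: H_fun_def add_increasing2)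
  moreover have "H_fun q 1 \<le> z" "1 \<le> b" using \<open>1 \<le> z\<close> by (simp_all add: H_fun_def b_def)
  moreover have "\<forall>x. 1 \<le> x \<and> x \<le> b \<longrightarrow> isCont (H_fun q) x"
    unfolding H_fun_def by (auto intro!: continuous_intros)
  ultimately obtain y where y: "1 \<le> y" "H_fun q y = z"
    using IVT[of "H_fun q" 1 z b] by blast
  have "w = y" if "1 \<le> w" "H_fun q w = z" for w
    using H_fun_strict_mono[OF q, of w y] H_fun_strict_mono[OF q, of y w] that y
    by (metis less_irrefl linorder_neqE_linordered_idom)
  then show ?thesis using y by blast
qed

lemma
  fixes q z :: real
  assumes "0 < q" "q < 1" "1 \<le> z"
  shows H_inv_ge_1: "1 \<le> H_inv q z" and H_fun_H_inv: "H_fun q (H_inv q z) = z"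
  using theI'[OF H_fun_bij[OF assms]] by (simp_all add: H_inv_def)

section \<open>Trees and their cells\<close>

locale dyadic_tree = prob_space M for M :: "'a measure" +
  fixes C :: "'a set \<Rightarrow> 'a set set" and T :: "'a set set"
  assumes tree_sets: "T \<subseteq> sets M"
    and tree_pos: "\<And>I. I \<in> T \<Longrightarrow> 0 < measure M I"
    and children: "\<And>I. I \<in> T \<Longrightarrow> C I \<subseteq> T \<and> countable (C I) \<and> disjoint (C I) \<and> \<Union>(C I) = I"
    and tree_eq_levels: "T = (\<Union>m. tree_level M C m)"
begin

abbreviation level :: "nat \<Rightarrow> 'a set set" where
  "level k \<equiv> tree_level M C k"

lemma level_0: "level 0 = {space M}"
  by (simp add: tree_level_def)

lemma level_Suc: "level (Suc m) = (\<Union>I\<in>level m. C I)"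
  by (simp add: tree_level_def)

lemma level_subset: "level m \<subseteq> T"
  using tree_eq_levels by auto

lemma level_sets: "I \<in> level m \<Longrightarrow> I \<in> sets M"
  using level_subset tree_sets by auto

lemma level_pos: "I \<in> level m \<Longrightarrow> 0 < measure M I"
  using level_subset tree_pos by auto

lemma level_partition: "countable (level m) \<and> disjoint (level m) \<and> \<Union>(level m) = space M"
proof (induction m)
  case 0
  then show ?case by (simp add: level_0 disjoint_def)
next
  case (Suc m)
  have C: "C I \<subseteq> T \<and> countable (C I) \<and> disjoint (C I) \<and> \<Union>(C I) = I" if "I \<in> level m" for I
    using children level_subset that by auto
  have "disjoint (level (Suc m))"
    unfolding disjoint_def level_Suc
  proof (intro ballI impI)
    fix J J' assume "J \<in> (\<Union>I\<in>level m. C I)" "J' \<in> (\<Union>I\<in>level m. C I)" "J \<noteq> J'"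
    then obtain I I' where I: "I \<in> level m" "J \<in> C I" and I': "I' \<in> level m" "J' \<in> C I'"
      by auto
    show "J \<inter> J' = {}"
    proof (cases "I = I'")
      case True
      then show ?thesis using C[OF I(1)] I I' \<open>J \<noteq> J'\<close> by (auto simp: disjoint_def)
    next
      case False
      then have "I \<inter> I' = {}" using Suc I I' by (auto simp: disjoint_def)
      moreover have "J \<subseteq> I" "J' \<subseteq> I'" using C I I' by auto
      ultimately show ?thesis by auto
    qed
  qed
  moreover have "countable (level (Suc m))"
    unfolding level_Suc using Suc C by (intro countable_UN) auto
  moreover have "\<Union>(level (Suc m)) = (\<Union>I\<in>level m. \<Union>(C I))"
    unfolding level_Suc by auto
  moreover have "\<dots> = \<Union>(level m)" using C by simp
  ultimately show ?case using Suc by simp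
qed

definition cell :: "nat \<Rightarrow> 'a \<Rightarrow> 'a set" where
  "cell k x = (THE I. I \<in> level k \<and> x \<in> I)"

lemma cell_unique:
  assumes "I \<in> level k" "x \<in> I" shows "cell k x = I"
  unfolding cell_def
proof (rule the_equality)
  fix J assume "J \<in> level k \<and> x \<in> J"
  then show "J = I" using level_partition[of k] assms by (auto simp: disjoint_def)
qed (use assms in simp)

lemma
  assumes "x \<in> space M"
  shows cell_in_level: "cell k x \<in> level k" and mem_cell: "x \<in> cell k x"
proof -
  obtain I where "I \<in> level k" "x \<in> I" using level_partition[of k] assms by auto
  then show "cell k x \<in> level k" "x \<in> cell k x" using cell_unique by auto
qed

lemma cell_sets: "x \<in> space M \<Longrightarrow> cell k x \<in> sets M"
  using cell_in_level level_sets by auto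

lemma cell_pos: "x \<in> space M \<Longrightarrow> 0 < measure M (cell k x)"
  using cell_in_level level_pos by auto

lemma cell_0: "x \<in> space M \<Longrightarrow> cell 0 x = space M"
  using cell_unique[of "space M" 0 x] by (simp add: level_0)

lemma cell_Suc_subset:
  assumes "x \<in> space M" shows "cell (Suc k) x \<subseteq> cell k x"
proof -
  obtain I where I: "I \<in> level k" "cell (Suc k) x \<in> C I"
    using cell_in_level[OF assms, of "Suc k"] level_Suc by auto
  then have "cell (Suc k) x \<subseteq> I" using children level_subset by blast
  moreover from this have "cell k x = I" using cell_unique[OF I(1)] mem_cell[OF assms] by auto
  ultimately show ?thesis by simp
qed

lemma cell_antimono:
  assumes "x \<in> space M" "j \<le> k" shows "cell k x \<subseteq> cell j x"
  using assms(2) by (induction k rule: dec_induct) (use cell_Suc_subset[OF assms(1)] in blast)+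

lemma cell_eq_coarser:
  assumes "x \<in> space M" "x' \<in> space M" "j \<le> k" "cell k x = cell k x'"
  shows "cell j x = cell j x'"
proof -
  have "x' \<in> cell j x" using cell_antimono[OF assms(1,3)] mem_cell[OF assms(2)] assms(4) by auto
  then show ?thesis using cell_unique cell_in_level[OF assms(1)] by auto
qed

lemma tree_cells:
  assumes "x \<in> space M" shows "{I\<in>T. x \<in> I} = range (\<lambda>k. cell k x)"
proof (intro equalityI subsetI)
  fix I assume "I \<in> {I\<in>T. x \<in> I}"
  then obtain k where "I \<in> level k" "x \<in> I" using tree_eq_levels by auto
  then show "I \<in> range (\<lambda>k. cell k x)" using cell_unique by auto
qed (use cell_in_level[OF assms] mem_cell[OF assms] level_subset in auto)

definition constant_on_cells :: "nat \<Rightarrow> ('a \<Rightarrow> 'b) \<Rightarrow> bool" where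
  "constant_on_cells k g \<longleftrightarrow>
     (\<forall>x\<in>space M. \<forall>x'\<in>space M. cell k x = cell k x' \<longrightarrow> g x = g x')"

lemma nn_integral_level_decomp:
  assumes [measurable]: "g \<in> borel_measurable M"
  shows "(\<integral>\<^sup>+x. g x \<partial>M) = (\<integral>\<^sup>+I. (\<integral>\<^sup>+x. g x * indicator I x \<partial>M) \<partial>count_space (level k))"
proof -
  have "(\<integral>\<^sup>+I. g x * indicator I x \<partial>count_space (level k)) = g x" if x: "x \<in> space M" for x
  proof -
    have "g x * indicator I x = g x * indicator {cell k x} I" if "I \<in> level k" for I
      using cell_unique[OF that] mem_cell[OF x, of k] by (cases "x \<in> I") (auto simp: indicator_def)
    then have "(\<integral>\<^sup>+I. g x * indicator I x \<partial>count_space (level k))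
        = (\<integral>\<^sup>+I. g x * indicator {cell k x} I \<partial>count_space (level k))"
      by (intro nn_integral_cong) simp
    then show ?thesis using cell_in_level[OF x] by (simp add: emeasure_count_space)
  qed
  then have "(\<integral>\<^sup>+x. g x \<partial>M) = (\<integral>\<^sup>+x. (\<integral>\<^sup>+I. g x * indicator I x \<partial>count_space (level k)) \<partial>M)"
    by (intro nn_integral_cong) simp
  also have "\<dots> = (\<integral>\<^sup>+I. (\<integral>\<^sup>+x. g x * indicator I x \<partial>M) \<partial>count_space (level k))"
    using level_partition[of k] level_sets by (intro nn_integral_count_space_nn_integral) auto
  finally show ?thesis .
qed

end

section \<open>Averages and truncated maximal functions\<close>

locale tree_function = dyadic_tree M C T for M C T +
  fixes \<phi> :: "'a \<Rightarrow> real" and q :: real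
  assumes phi_measurable[measurable]: "\<phi> \<in> borel_measurable M"
    and phi_nonneg: "\<And>x. x \<in> space M \<Longrightarrow> 0 \<le> \<phi> x"
    and phi_integrable: "integrable M \<phi>"
    and mean_pos: "0 < integral\<^sup>L M \<phi>"
    and q_pos: "0 < q" and q_less_1: "q < 1"
begin

abbreviation mean :: real where
  "mean \<equiv> integral\<^sup>L M \<phi>"

definition mass :: "'a set \<Rightarrow> ennreal" where
  "mass I = (\<integral>\<^sup>+y. ennreal (\<phi> y) * indicator I y \<partial>M)"

definition avg :: "'a set \<Rightarrow> real" where
  "avg I = enn2real (mass I) / measure M I"

lemma nn_integral_phi: "(\<integral>\<^sup>+y. ennreal (\<phi> y) \<partial>M) = ennreal mean"
  using phi_nonneg by (intro nn_integral_eq_integral phi_integrable) auto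

lemma mass_finite: "mass I \<noteq> \<infinity>"
proof -
  have "mass I \<le> (\<integral>\<^sup>+y. ennreal (\<phi> y) \<partial>M)"
    unfolding mass_def by (intro nn_integral_mono) (simp add: indicator_def)
  then show ?thesis using nn_integral_phi by (auto simp: top_unique)
qed

lemma mass_eq_avg:
  assumes "I \<in> sets M" "0 < measure M I"
  shows "mass I = ennreal (avg I) * emeasure M I"
proof -
  have "mass I = ennreal (avg I * measure M I)"
    using mass_finite[of I] assms by (simp add: avg_def ennreal_enn2real less_top)
  then show ?thesis
    using assms by (simp add: avg_def emeasure_eq_measure flip: ennreal_mult)
qed

lemma avg_nonneg: "0 \<le> avg I"
  by (simp add: avg_def)

lemma avg_space: "avg (space M) = mean"
proof -
  have "mass (space M) = (\<integral>\<^sup>+y. ennreal (\<phi> y) \<partial>M)"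
    unfolding mass_def by (intro nn_integral_cong) simp
  then show ?thesis using nn_integral_phi mean_pos by (simp add: avg_def prob_space)
qed

lemma dyadic_max_eq_SUP_avg:
  assumes "x \<in> space M"
  shows "dyadic_max M T \<phi> x = (SUP k. ennreal (avg (cell k x)))"
proof -
  have "(\<integral>\<^sup>+y. ennreal \<bar>\<phi> y\<bar> * indicator I y \<partial>M) / emeasure M I = ennreal (avg I)"
    if "I \<in> sets M" "0 < measure M I" for I
  proof -
    have "(\<integral>\<^sup>+y. ennreal \<bar>\<phi> y\<bar> * indicator I y \<partial>M) = mass I"
      unfolding mass_def using phi_nonneg by (intro nn_integral_cong) simp
    also have "\<dots> = ennreal (enn2real (mass I))"
      using mass_finite[of I] by (simp add: ennreal_enn2real less_top)
    finally show ?thesis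
      using that by (simp add: emeasure_eq_measure divide_ennreal avg_def)
  qed
  then show ?thesis
    unfolding dyadic_max_def tree_cells[OF assms] image_image
    using cell_sets[OF assms] cell_pos[OF assms] by simp
qed

lemma avg_cell_measurable[measurable]: "(\<lambda>x. avg (cell k x)) \<in> borel_measurable M"
proof -
  have eq: "(SUP I\<in>level k. ennreal (avg I) * indicator I x) = ennreal (avg (cell k x))"
    if x: "x \<in> space M" for x
  proof (rule antisym)
    show "(SUP I\<in>level k. ennreal (avg I) * indicator I x) \<le> ennreal (avg (cell k x))"
      using cell_unique by (intro SUP_least) (auto simp: indicator_def)
    show "ennreal (avg (cell k x)) \<le> (SUP I\<in>level k. ennreal (avg I) * indicator I x)"
      using cell_in_level[OF x] mem_cell[OF x] by (intro SUP_upper2[of "cell k x"]) auto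
  qed
  have "(\<lambda>x. enn2real (SUP I\<in>level k. ennreal (avg I) * indicator I x)) \<in> borel_measurable M"
    using level_partition[of k] level_sets
    by (intro borel_measurable_enn2real borel_measurable_SUP) auto
  then show ?thesis
    by (rule measurable_cong[THEN iffD1, rotated]) (simp add: eq avg_nonneg)
qed

lemma dyadic_max_measurable[measurable]: "dyadic_max M T \<phi> \<in> borel_measurable M"
proof -
  have "(\<lambda>x. SUP k. ennreal (avg (cell k x))) \<in> borel_measurable M" by measurable
  then show ?thesis by (rule measurable_cong[THEN iffD1, rotated]) (simp add: dyadic_max_eq_SUP_avg)
qed

lemma nn_integral_mult_avg_cell:
  assumes [measurable]: "g \<in> borel_measurable M" and g_nonneg: "\<And>x. x \<in> space M \<Longrightarrow> 0 \<le> g x"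
    and "constant_on_cells k g" and I: "I \<in> level k"
  shows "(\<integral>\<^sup>+x. ennreal (\<phi> x * g x) * indicator I x \<partial>M)
       = (\<integral>\<^sup>+x. ennreal (avg (cell k x) * g x) * indicator I x \<partial>M)"
proof -
  have I_sets[measurable]: "I \<in> sets M" and "0 < measure M I" using I level_sets level_pos by auto
  then obtain x0 where x0: "x0 \<in> I" by fastforce
  have "I \<subseteq> space M" using sets.sets_into_space[OF I_sets] .
  have cell_I: "cell k x = I" if "x \<in> I" for x using cell_unique[OF I that] .
  have g_I: "g x = g x0" if "x \<in> I" for x
    using assms(3) that x0 \<open>I \<subseteq> space M\<close> cell_I unfolding constant_on_cells_def by blast
  have "0 \<le> g x0" using g_nonneg x0 \<open>I \<subseteq> space M\<close> by auto
  have "ennreal (\<phi> x * g x) * indicator I x = ennreal (g x0) * (ennreal (\<phi> x) * indicator I x)" for x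
    using g_I[of x] \<open>0 \<le> g x0\<close> by (cases "x \<in> I") (auto simp: ennreal_mult'' mult.commute)
  then have "(\<integral>\<^sup>+x. ennreal (\<phi> x * g x) * indicator I x \<partial>M)
      = (\<integral>\<^sup>+x. ennreal (g x0) * (ennreal (\<phi> x) * indicator I x) \<partial>M)"
    by simp
  also have "\<dots> = ennreal (g x0) * mass I"
    unfolding mass_def by (rule nn_integral_cmult) measurable
  also have "\<dots> = ennreal (avg I * g x0) * emeasure M I"
    using mass_eq_avg[OF I_sets \<open>0 < measure M I\<close>] \<open>0 \<le> g x0\<close> avg_nonneg[of I]
    by (simp add: ennreal_mult mult_ac)
  also have "\<dots> = (\<integral>\<^sup>+x. ennreal (avg I * g x0) * indicator I x \<partial>M)"
    by (simp add: nn_integral_cmult_indicator)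
  also have "\<dots> = (\<integral>\<^sup>+x. ennreal (avg (cell k x) * g x) * indicator I x \<partial>M)"
    using g_I cell_I by (intro nn_integral_cong) (simp split: split_indicator)
  finally show ?thesis .
qed

lemma nn_integral_mult_avg:
  assumes [measurable]: "g \<in> borel_measurable M" and "\<And>x. x \<in> space M \<Longrightarrow> 0 \<le> g x"
    and "constant_on_cells k g"
  shows "(\<integral>\<^sup>+x. ennreal (\<phi> x * g x) \<partial>M) = (\<integral>\<^sup>+x. ennreal (avg (cell k x) * g x) \<partial>M)"
proof -
  have "(\<integral>\<^sup>+I. (\<integral>\<^sup>+x. ennreal (\<phi> x * g x) * indicator I x \<partial>M) \<partial>count_space (level k))
      = (\<integral>\<^sup>+I. (\<integral>\<^sup>+x. ennreal (avg (cell k x) * g x) * indicator I x \<partial>M) \<partial>count_space (level k))"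
    by (rule nn_integral_cong) (simp add: nn_integral_mult_avg_cell[OF assms])
  moreover have "(\<integral>\<^sup>+x. ennreal (\<phi> x * g x) \<partial>M)
      = (\<integral>\<^sup>+I. (\<integral>\<^sup>+x. ennreal (\<phi> x * g x) * indicator I x \<partial>M) \<partial>count_space (level k))"
    "(\<integral>\<^sup>+x. ennreal (avg (cell k x) * g x) \<partial>M)
      = (\<integral>\<^sup>+I. (\<integral>\<^sup>+x. ennreal (avg (cell k x) * g x) * indicator I x \<partial>M) \<partial>count_space (level k))"
    by (rule nn_integral_level_decomp, measurable)+
  ultimately show ?thesis by simp
qed

primrec trunc_max :: "nat \<Rightarrow> 'a \<Rightarrow> real" where
  "trunc_max 0 x = mean"
| "trunc_max (Suc m) x = max (trunc_max m x) (avg (cell (Suc m) x))"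

lemma trunc_max_measurable[measurable]: "trunc_max m \<in> borel_measurable M"
  by (induction m) auto

lemma mean_le_trunc_max: "mean \<le> trunc_max m x"
  by (induction m) auto

lemma trunc_max_pos: "0 < trunc_max m x"
  using mean_le_trunc_max[of m x] mean_pos by linarith

lemma constant_on_cells_trunc_max:
  assumes "m \<le> k" shows "constant_on_cells k (trunc_max m)"
  unfolding constant_on_cells_def
proof (intro ballI impI)
  fix x x' assume x: "x \<in> space M" "x' \<in> space M" and eq: "cell k x = cell k x'"
  show "trunc_max m x = trunc_max m x'"
    using assms
  proof (induction m)
    case (Suc m)
    then show ?case using cell_eq_coarser[OF x Suc.prems eq] by simp
  qed simp
qed

lemma SUP_trunc_max:
  assumes "x \<in> space M"
  shows "(SUP m. ennreal (trunc_max m x)) = dyadic_max M T \<phi> x"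
proof -
  have "\<exists>j\<le>m. trunc_max m x = avg (cell j x)" for m
  proof (induction m)
    case 0
    then show ?case using assms by (simp add: cell_0 avg_space)
  next
    case (Suc m)
    then show ?case by (auto simp: max_def intro: le_SucI)
  qed
  then have "(SUP m. ennreal (trunc_max m x)) \<le> (SUP k. ennreal (avg (cell k x)))"
    by (intro SUP_least) (metis SUP_upper2 UNIV_I order_refl)
  moreover have "avg (cell k x) \<le> trunc_max k x" for k
    using assms by (cases k) (auto simp: cell_0 avg_space)
  then have "(SUP k. ennreal (avg (cell k x))) \<le> (SUP m. ennreal (trunc_max m x))"
    by (intro SUP_mono) (auto intro: ennreal_leI)
  ultimately show ?thesis
    unfolding dyadic_max_eq_SUP_avg[OF assms] by (rule antisym)
qed


section \<open>The tangent functional\<close>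

definition tangent_functional :: "('a \<Rightarrow> real) \<Rightarrow> ('a \<Rightarrow> real) \<Rightarrow> ennreal" where
  "tangent_functional \<psi> F =
     (\<integral>\<^sup>+x. ennreal ((1 - q) * F x powr q + q * \<psi> x * F x powr (q - 1)) \<partial>M)"

lemma tangent_functional_split:
  assumes [measurable]: "\<psi> \<in> borel_measurable M" "F \<in> borel_measurable M"
    and "\<And>x. x \<in> space M \<Longrightarrow> 0 \<le> \<psi> x"
  shows "tangent_functional \<psi> F = (\<integral>\<^sup>+x. ennreal ((1 - q) * F x powr q) \<partial>M)
           + (\<integral>\<^sup>+x. ennreal (\<psi> x * (q * F x powr (q - 1))) \<partial>M)"
proof -
  have "tangent_functional \<psi> F
      = (\<integral>\<^sup>+x. ennreal ((1 - q) * F x powr q) + ennreal (\<psi> x * (q * F x powr (q - 1))) \<partial>M)"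
    unfolding tangent_functional_def using assms(3) q_pos q_less_1
    by (intro nn_integral_cong) (simp add: mult_ac)
  also have "\<dots> = (\<integral>\<^sup>+x. ennreal ((1 - q) * F x powr q) \<partial>M)
           + (\<integral>\<^sup>+x. ennreal (\<psi> x * (q * F x powr (q - 1))) \<partial>M)"
    by (rule nn_integral_add) auto
  finally show ?thesis .
qed

lemma tangent_functional_avg:
  assumes [measurable]: "F \<in> borel_measurable M" and "constant_on_cells k F"
  shows "tangent_functional \<phi> F = tangent_functional (\<lambda>x. avg (cell k x)) F"
proof -
  have "constant_on_cells k (\<lambda>x. q * F x powr (q - 1))"
    using assms(2) unfolding constant_on_cells_def by metis
  then have "(\<integral>\<^sup>+x. ennreal (\<phi> x * (q * F x powr (q - 1))) \<partial>M)
      = (\<integral>\<^sup>+x. ennreal (avg (cell k x) * (q * F x powr (q - 1))) \<partial>M)"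
    using q_pos by (intro nn_integral_mult_avg) simp_all
  then show ?thesis
    using tangent_functional_split[OF phi_measurable assms(1) phi_nonneg]
      tangent_functional_split[OF avg_cell_measurable assms(1) avg_nonneg] by simp
qed

text \<open>On a cell of level \<open>m + 1\<close> the truncation \<open>trunc_max (m + 1)\<close> is constant, so \<open>\<phi>\<close> may be
  replaced by its average there; and moving the point of tangency from \<open>F\<close> up to
  \<open>max F avg\<close> can only lower the tangent line of \<open>t\<^sup>q\<close>, evaluated at \<open>avg\<close>.\<close>
lemma tangent_functional_trunc_max_Suc_le:
  "tangent_functional \<phi> (trunc_max (Suc m)) \<le> tangent_functional \<phi> (trunc_max m)"
proof -
  let ?a = "\<lambda>x. avg (cell (Suc m) x)"
  have "tangent_functional \<phi> (trunc_max (Suc m)) = tangent_functional ?a (trunc_max (Suc m))"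
    using constant_on_cells_trunc_max[of "Suc m" "Suc m"]
    by (intro tangent_functional_avg) (auto simp del: trunc_max.simps)
  also have "\<dots> \<le> tangent_functional ?a (trunc_max m)"
    unfolding tangent_functional_def
    using powr_tangent_max_le[OF q_pos q_less_1 trunc_max_pos avg_nonneg]
    by (intro nn_integral_mono ennreal_leI) simp
  also have "\<dots> = tangent_functional \<phi> (trunc_max m)"
    using constant_on_cells_trunc_max[of m "Suc m"]
    by (intro tangent_functional_avg[symmetric]) auto
  finally show ?thesis .
qed

lemma tangent_functional_trunc_max_le: "tangent_functional \<phi> (trunc_max m) \<le> ennreal (mean powr q)"
proof (induction m)
  case 0
  have "tangent_functional \<phi> (trunc_max 0) = tangent_functional (\<lambda>x. avg (cell 0 x)) (trunc_max 0)"
    using constant_on_cells_trunc_max[of 0 0] by (intro tangent_functional_avg) simp_all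
  also have "\<dots> = ennreal ((1 - q) * mean powr q + q * mean * mean powr (q - 1))"
    by (simp add: tangent_functional_def cell_0 avg_space emeasure_space_1 cong: nn_integral_cong)
  also have "(1 - q) * mean powr q + q * mean * mean powr (q - 1) = mean powr q"
    using mean_pos powr_add[of mean 1 "q - 1"] by (simp add: algebra_simps)
  finally show ?case by simp
next
  case (Suc m)
  then show ?case using tangent_functional_trunc_max_Suc_le order_trans by blast
qed


section \<open>The dyadic maximal function\<close>

text \<open>Where \<open>dyadic_max\<close> is infinite, \<open>max_fun\<close> is \<open>enn2real \<infinity> = 0\<close>; this is harmless since
  that happens only on a null set.\<close>
abbreviation max_fun :: "'a \<Rightarrow> real" where
  "max_fun x \<equiv> enn2real (dyadic_max M T \<phi> x)"

lemma trunc_max_le_dyadic_max: "x \<in> space M \<Longrightarrow> ennreal (trunc_max m x) \<le> dyadic_max M T \<phi> x"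
  using SUP_trunc_max[of x] by (metis SUP_upper UNIV_I)

lemma dyadic_max_eq_ennreal: "dyadic_max M T \<phi> x \<noteq> \<infinity> \<Longrightarrow> dyadic_max M T \<phi> x = ennreal (max_fun x)"
  by (simp add: ennreal_enn2real less_top)

lemma
  assumes "x \<in> space M" "dyadic_max M T \<phi> x \<noteq> \<infinity>"
  shows trunc_max_le_max_fun: "trunc_max m x \<le> max_fun x"
    and mean_le_max_fun: "mean \<le> max_fun x"
proof -
  show "trunc_max m x \<le> max_fun x" for m
    using trunc_max_le_dyadic_max[OF assms(1), of m] dyadic_max_eq_ennreal[OF assms(2)]
    by (metis ennreal_le_iff enn2real_nonneg)
  from this[of 0] show "mean \<le> max_fun x" by simp
qed

lemma trunc_max_tendsto:
  assumes "x \<in> space M" "dyadic_max M T \<phi> x \<noteq> \<infinity>"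
  shows "(\<lambda>m. trunc_max m x) \<longlonglongrightarrow> max_fun x"
proof -
  have "incseq (\<lambda>m. ennreal (trunc_max m x))"
    by (rule incseq_SucI) (simp add: ennreal_leI)
  then have "(\<lambda>m. ennreal (trunc_max m x)) \<longlonglongrightarrow> ennreal (max_fun x)"
    using LIMSEQ_SUP SUP_trunc_max[OF assms(1)] dyadic_max_eq_ennreal[OF assms(2)] by metis
  moreover have "\<forall>\<^sub>F m in sequentially. 0 \<le> trunc_max m x"
    using trunc_max_pos less_imp_le by (intro always_eventually) blast
  ultimately show ?thesis by (simp add: tendsto_ennreal_iff)
qed

lemma epowr_dyadic_max_eq_SUP:
  assumes x: "x \<in> space M"
  shows "epowr (dyadic_max M T \<phi> x) q = (SUP m. ennreal (trunc_max m x powr q))"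
proof (cases "dyadic_max M T \<phi> x = \<infinity>")
  case False
  have "incseq (\<lambda>m. ennreal (trunc_max m x powr q))"
    using q_pos trunc_max_pos less_imp_le by (intro incseq_SucI ennreal_leI powr_mono2) auto
  moreover have "(\<lambda>m. ennreal (trunc_max m x powr q)) \<longlonglongrightarrow> ennreal (max_fun x powr q)"
    using trunc_max_tendsto[OF x False] mean_le_max_fun[OF x False] mean_pos
    by (intro tendsto_ennrealI tendsto_powr[OF _ tendsto_const]) auto
  ultimately have "(SUP m. ennreal (trunc_max m x powr q)) = ennreal (max_fun x powr q)"
    using LIMSEQ_unique LIMSEQ_SUP by blast
  then show ?thesis using False by (simp add: epowr_def)
next
  case True
  have "(SUP m. ennreal (trunc_max m x powr q)) = \<infinity>"
  proof (rule ccontr)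
    define s where "s = enn2real (SUP m. ennreal (trunc_max m x powr q))"
    assume "(SUP m. ennreal (trunc_max m x powr q)) \<noteq> \<infinity>"
    then have fin: "(SUP m. ennreal (trunc_max m x powr q)) < top"
      by (metis infinity_ennreal_def less_top)
    have "trunc_max m x powr q \<le> s" for m
      using enn2real_mono[OF SUP_upper[OF UNIV_I] fin, of m] by (simp add: s_def)
    then have "trunc_max m x \<le> s powr (1 / q)" for m
      using powr_mono2[of "1 / q" "trunc_max m x powr q" s] q_pos trunc_max_pos[of m x]
      by (simp add: powr_powr)
    then have "dyadic_max M T \<phi> x \<le> ennreal (s powr (1 / q))"
      unfolding SUP_trunc_max[OF x, symmetric] by (intro SUP_least ennreal_leI)
    then show False using True by (simp add: top_unique)
  qed
  moreover have "epowr (dyadic_max M T \<phi> x) q = \<infinity>" using True by (simp add: epowr_def)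
  ultimately show ?thesis by metis
qed

lemma AE_dyadic_max_finite: "AE x in M. dyadic_max M T \<phi> x \<noteq> \<infinity>"
proof -
  have "incseq (\<lambda>m x. ennreal (trunc_max m x powr q))"
    using q_pos trunc_max_pos less_imp_le
    by (intro incseq_SucI le_funI ennreal_leI powr_mono2) auto
  then have "(\<integral>\<^sup>+x. epowr (dyadic_max M T \<phi> x) q \<partial>M) = (SUP m. (\<integral>\<^sup>+x. ennreal (trunc_max m x powr q) \<partial>M))"
    by (simp add: epowr_dyadic_max_eq_SUP nn_integral_monotone_convergence_SUP cong: nn_integral_cong)
  moreover have "ennreal (1 - q) * (\<integral>\<^sup>+x. ennreal (trunc_max m x powr q) \<partial>M) \<le> ennreal (mean powr q)" for m
  proof -
    have "ennreal (1 - q) * (\<integral>\<^sup>+x. ennreal (trunc_max m x powr q) \<partial>M)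
        = (\<integral>\<^sup>+x. ennreal ((1 - q) * trunc_max m x powr q) \<partial>M)"
      using q_less_1 by (simp add: ennreal_mult nn_integral_cmult[symmetric])
    also have "\<dots> \<le> tangent_functional \<phi> (trunc_max m)"
      unfolding tangent_functional_def using q_pos q_less_1 phi_nonneg trunc_max_pos less_imp_le
      by (intro nn_integral_mono ennreal_leI) auto
    finally show ?thesis using tangent_functional_trunc_max_le order_trans by blast
  qed
  ultimately have "ennreal (1 - q) * (\<integral>\<^sup>+x. epowr (dyadic_max M T \<phi> x) q \<partial>M) \<le> ennreal (mean powr q)"
    by (simp add: SUP_mult_left_ennreal SUP_least)
  then have "(\<integral>\<^sup>+x. epowr (dyadic_max M T \<phi> x) q \<partial>M) \<noteq> \<infinity>"
    using q_less_1 by (auto simp: ennreal_mult_top top_unique)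
  then have "AE x in M. epowr (dyadic_max M T \<phi> x) q \<noteq> \<infinity>"
    by (intro nn_integral_PInf_AE) (auto simp: epowr_def)
  then show ?thesis by eventually_elim (auto simp: epowr_def)
qed


lemma tangent_functional_max_fun_le: "tangent_functional \<phi> max_fun \<le> ennreal (mean powr q)"
proof -
  let ?u = "\<lambda>m x. ennreal ((1 - q) * trunc_max m x powr q + q * \<phi> x * max_fun x powr (q - 1))"
  have inc: "incseq ?u"
    using q_pos q_less_1 trunc_max_pos less_imp_le phi_nonneg
    by (intro incseq_SucI le_funI ennreal_leI add_right_mono mult_left_mono powr_mono2) auto
  have "tangent_functional \<phi> max_fun = (\<integral>\<^sup>+x. (SUP m. ?u m x) \<partial>M)"
    unfolding tangent_functional_def
  proof (rule nn_integral_cong_AE)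
    show "AE x in M. ennreal ((1 - q) * max_fun x powr q + q * \<phi> x * max_fun x powr (q - 1))
        = (SUP m. ?u m x)"
      using AE_dyadic_max_finite AE_space
    proof eventually_elim
      case (elim x)
      then have x: "x \<in> space M" and fin: "dyadic_max M T \<phi> x \<noteq> \<infinity>" by auto
      have "incseq (\<lambda>m. ?u m x)" using inc by (auto simp: incseq_def le_fun_def)
      moreover have "(\<lambda>m. ?u m x)
          \<longlonglongrightarrow> ennreal ((1 - q) * max_fun x powr q + q * \<phi> x * max_fun x powr (q - 1))"
        using trunc_max_tendsto[OF x fin] mean_le_max_fun[OF x fin] mean_pos
        by (intro tendsto_ennrealI tendsto_intros) auto
      ultimately show ?case using LIMSEQ_unique LIMSEQ_SUP by blast
    qed
  qed
  also have "\<dots> = (SUP m. (\<integral>\<^sup>+x. ?u m x \<partial>M))"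
    using inc by (intro nn_integral_monotone_convergence_SUP) auto
  also have "\<dots> \<le> ennreal (mean powr q)"
  proof (rule SUP_least)
    fix m
    have "max_fun x powr (q - 1) \<le> trunc_max m x powr (q - 1)" if x: "x \<in> space M" for x
    proof (cases "dyadic_max M T \<phi> x = \<infinity>")
      case False
      then show ?thesis
        using trunc_max_le_max_fun[OF x False] trunc_max_pos[of m x] q_less_1
        by (intro powr_mono2') auto
    qed simp
    then have "(\<integral>\<^sup>+x. ?u m x \<partial>M) \<le> tangent_functional \<phi> (trunc_max m)"
      unfolding tangent_functional_def using q_pos phi_nonneg
      by (intro nn_integral_mono ennreal_leI add_left_mono mult_left_mono) auto
    then show "(\<integral>\<^sup>+x. ?u m x \<partial>M) \<le> ennreal (mean powr q)"
      using tangent_functional_trunc_max_le order_trans by blast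
  qed
  finally show ?thesis .
qed

lemma
  shows integrable_max_fun_powr: "integrable M (\<lambda>x. max_fun x powr q)"
    and integrable_phi_max_fun_powr: "integrable M (\<lambda>x. \<phi> x * max_fun x powr (q - 1))"
    and maximal_tangent_inequality:
      "(1 - q) * (\<integral>x. max_fun x powr q \<partial>M) + q * (\<integral>x. \<phi> x * max_fun x powr (q - 1) \<partial>M)
         \<le> mean powr q"
proof -
  define G where "G x = (1 - q) * max_fun x powr q + q * (\<phi> x * max_fun x powr (q - 1))" for x
  have G_nonneg: "0 \<le> G x" if "x \<in> space M" for x
    unfolding G_def using q_pos q_less_1 phi_nonneg[OF that] by simp
  have nn_G: "(\<integral>\<^sup>+x. ennreal (G x) \<partial>M) = tangent_functional \<phi> max_fun"
    unfolding tangent_functional_def G_def by (simp add: mult_ac)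
  have [measurable]: "G \<in> borel_measurable M" unfolding G_def by measurable
  have "integrable M G"
    using G_nonneg tangent_functional_max_fun_le
    by (intro integrableI_nonneg) (auto simp: nn_G le_less_trans)
  have "norm (max_fun x powr q) \<le> norm (G x / (1 - q))"
    "norm (\<phi> x * max_fun x powr (q - 1)) \<le> norm (G x / q)" if x: "x \<in> space M" for x
  proof -
    have "(1 - q) * max_fun x powr q \<le> G x" "q * (\<phi> x * max_fun x powr (q - 1)) \<le> G x"
      unfolding G_def using q_pos q_less_1 phi_nonneg[OF x] by simp_all
    then show "norm (max_fun x powr q) \<le> norm (G x / (1 - q))"
      "norm (\<phi> x * max_fun x powr (q - 1)) \<le> norm (G x / q)"
      using G_nonneg[OF x] q_pos q_less_1 phi_nonneg[OF x] by (simp_all add: field_simps)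
  qed
  note bounds = this
  show i1: "integrable M (\<lambda>x. max_fun x powr q)"
    using bounds(1) by (intro Bochner_Integration.integrable_bound[OF
        integrable_divide_zero[OF \<open>integrable M G\<close>, of "1 - q"]] AE_I2) simp_all
  show i2: "integrable M (\<lambda>x. \<phi> x * max_fun x powr (q - 1))"
    using bounds(2) by (intro Bochner_Integration.integrable_bound[OF
        integrable_divide_zero[OF \<open>integrable M G\<close>, of q]] AE_I2) simp_all
  have "ennreal (\<integral>x. G x \<partial>M) = (\<integral>\<^sup>+x. ennreal (G x) \<partial>M)"
    using G_nonneg \<open>integrable M G\<close> by (intro nn_integral_eq_integral[symmetric]) auto
  then have "ennreal (\<integral>x. G x \<partial>M) \<le> ennreal (mean powr q)"
    using tangent_functional_max_fun_le by (simp only: nn_G)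
  moreover have "(\<integral>x. G x \<partial>M)
      = (1 - q) * (\<integral>x. max_fun x powr q \<partial>M) + q * (\<integral>x. \<phi> x * max_fun x powr (q - 1) \<partial>M)"
    unfolding G_def using i1 i2 by simp
  ultimately show "(1 - q) * (\<integral>x. max_fun x powr q \<partial>M) + q * (\<integral>x. \<phi> x * max_fun x powr (q - 1) \<partial>M)
      \<le> mean powr q"
    by (simp add: ennreal_le_iff)
qed

lemma nn_integral_epowr_dyadic_max:
  "(\<integral>\<^sup>+x. epowr (dyadic_max M T \<phi> x) q \<partial>M) = ennreal (\<integral>x. max_fun x powr q \<partial>M)"
proof -
  have "(\<integral>\<^sup>+x. epowr (dyadic_max M T \<phi> x) q \<partial>M) = (\<integral>\<^sup>+x. ennreal (max_fun x powr q) \<partial>M)"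
    using AE_dyadic_max_finite by (intro nn_integral_cong_AE) (auto simp: epowr_def)
  also have "\<dots> = ennreal (\<integral>x. max_fun x powr q \<partial>M)"
    by (intro nn_integral_eq_integral integrable_max_fun_powr) auto
  finally show ?thesis .
qed


lemma integrable_deviation:
  assumes "integrable M (\<lambda>x. \<phi> x powr q)" "0 \<le> y"
  shows "integrable M (\<lambda>x. \<bar>max_fun x - y * \<phi> x\<bar> powr q)"
proof (rule Bochner_Integration.integrable_bound)
  show "integrable M (\<lambda>x. max_fun x powr q + y powr q * \<phi> x powr q)"
    using integrable_max_fun_powr assms(1) by auto
  have "\<bar>max_fun x - y * \<phi> x\<bar> powr q \<le> max_fun x powr q + y powr q * \<phi> x powr q"
    if x: "x \<in> space M" for x
  proof -
    have "0 \<le> y * \<phi> x" using assms(2) phi_nonneg[OF x] by simp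
    moreover have "0 \<le> max_fun x" by simp
    ultimately have "\<bar>max_fun x - y * \<phi> x\<bar> powr q \<le> (max_fun x + y * \<phi> x) powr q"
      using q_pos by (intro powr_mono2) linarith+
    also have "\<dots> \<le> max_fun x powr q + (y * \<phi> x) powr q"
      using q_pos q_less_1 \<open>0 \<le> y * \<phi> x\<close> by (intro powr_add_le) auto
    finally show ?thesis using assms(2) phi_nonneg[OF x] by (simp add: powr_mult)
  qed
  then show "AE x in M. norm (\<bar>max_fun x - y * \<phi> x\<bar> powr q)
      \<le> norm (max_fun x powr q + y powr q * \<phi> x powr q)"
    by (intro AE_I2) simp
qed simp

lemma nn_integral_deviation:
  assumes "integrable M (\<lambda>x. \<phi> x powr q)" "0 \<le> y"
  shows "(\<integral>\<^sup>+x. (if dyadic_max M T \<phi> x = \<infinity> then \<infinity>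
            else ennreal (\<bar>enn2real (dyadic_max M T \<phi> x) - y * \<phi> x\<bar> powr q)) \<partial>M)
       = ennreal (\<integral>x. \<bar>max_fun x - y * \<phi> x\<bar> powr q \<partial>M)"
proof -
  have "(\<integral>\<^sup>+x. (if dyadic_max M T \<phi> x = \<infinity> then \<infinity>
            else ennreal (\<bar>enn2real (dyadic_max M T \<phi> x) - y * \<phi> x\<bar> powr q)) \<partial>M)
      = (\<integral>\<^sup>+x. ennreal (\<bar>max_fun x - y * \<phi> x\<bar> powr q) \<partial>M)"
    using AE_dyadic_max_finite by (intro nn_integral_cong_AE) auto
  also have "\<dots> = ennreal (\<integral>x. \<bar>max_fun x - y * \<phi> x\<bar> powr q \<partial>M)"
    using integrable_deviation[OF assms] by (intro nn_integral_eq_integral) auto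
  finally show ?thesis .
qed

lemma abs_integral_max_fun_powr_diff_le:
  assumes "integrable M (\<lambda>x. \<phi> x powr q)" "0 \<le> y"
  shows "\<bar>(\<integral>x. max_fun x powr q \<partial>M) - y powr q * (\<integral>x. \<phi> x powr q \<partial>M)\<bar>
           \<le> (\<integral>x. \<bar>max_fun x - y * \<phi> x\<bar> powr q \<partial>M)"
proof -
  let ?g = "\<lambda>x. max_fun x powr q - y powr q * \<phi> x powr q"
  have "integrable M ?g" using integrable_max_fun_powr assms(1) by auto
  have "(\<integral>x. max_fun x powr q \<partial>M) - y powr q * (\<integral>x. \<phi> x powr q \<partial>M) = (\<integral>x. ?g x \<partial>M)"
    using integrable_max_fun_powr assms(1) by simp
  also have "\<bar>\<dots>\<bar> \<le> (\<integral>x. \<bar>?g x\<bar> \<partial>M)"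
    using integral_norm_bound[of M ?g] by simp
  also have "\<dots> \<le> (\<integral>x. \<bar>max_fun x - y * \<phi> x\<bar> powr q \<partial>M)"
  proof (rule integral_mono)
    fix x assume x: "x \<in> space M"
    have "y powr q * \<phi> x powr q = (y * \<phi> x) powr q"
      using assms(2) phi_nonneg[OF x] by (simp add: powr_mult)
    then show "\<bar>?g x\<bar> \<le> \<bar>max_fun x - y * \<phi> x\<bar> powr q"
      using abs_powr_diff_le[of q "max_fun x" "y * \<phi> x"] q_pos q_less_1 assms(2) phi_nonneg[OF x]
      by simp
  qed (use \<open>integrable M ?g\<close> integrable_deviation[OF assms] in auto)
  finally show ?thesis .
qed

lemma deviation_le_tangent_gap:
  assumes "integrable M (\<lambda>x. \<phi> x powr q)" "0 \<le> y" "0 < \<kappa>"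
    and stab: "\<forall>r\<ge>0. \<bar>1 - r\<bar> powr q \<le> \<delta> powr q + tangent_gap q r / \<kappa>"
  shows "(\<integral>x. \<bar>max_fun x - y * \<phi> x\<bar> powr q \<partial>M)
    \<le> \<delta> powr q * (\<integral>x. max_fun x powr q \<partial>M)
       + ((1 - q) * (\<integral>x. max_fun x powr q \<partial>M) + q * y * (\<integral>x. \<phi> x * max_fun x powr (q - 1) \<partial>M)
          - y powr q * (\<integral>x. \<phi> x powr q \<partial>M)) / \<kappa>"
proof -
  let ?R = "\<lambda>x. \<delta> powr q * max_fun x powr q + ((1 - q) * max_fun x powr q
    + q * y * (\<phi> x * max_fun x powr (q - 1)) - y powr q * \<phi> x powr q) / \<kappa>"
  have "integrable M ?R"
    using integrable_max_fun_powr integrable_phi_max_fun_powr assms(1) by auto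
  have "AE x in M. \<bar>max_fun x - y * \<phi> x\<bar> powr q \<le> ?R x"
    using AE_dyadic_max_finite AE_space
  proof eventually_elim
    case (elim x)
    then have x: "x \<in> space M" and "0 < max_fun x"
      using mean_le_max_fun mean_pos by (auto intro: less_le_trans)
    have "0 \<le> y * \<phi> x" using assms(2) phi_nonneg[OF x] by simp
    have "\<bar>max_fun x - y * \<phi> x\<bar> powr q \<le> \<delta> powr q * max_fun x powr q
        + ((1 - q) * max_fun x powr q + q * (y * \<phi> x) * max_fun x powr (q - 1) - (y * \<phi> x) powr q) / \<kappa>"
      by (rule abs_diff_powr_le_tangent_gap[OF q_pos q_less_1 \<open>0 < max_fun x\<close>
            \<open>0 \<le> y * \<phi> x\<close> \<open>0 < \<kappa>\<close> stab])
    also have "\<dots> = ?R x" using assms(2) phi_nonneg[OF x] by (simp add: powr_mult mult_ac)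
    finally show ?case .
  qed
  then have "(\<integral>x. \<bar>max_fun x - y * \<phi> x\<bar> powr q \<partial>M) \<le> (\<integral>x. ?R x \<partial>M)"
    using integrable_deviation[OF assms(1,2)] \<open>integrable M ?R\<close> by (intro integral_mono_AE)
  also have "\<dots> = \<delta> powr q * (\<integral>x. max_fun x powr q \<partial>M)
       + ((1 - q) * (\<integral>x. max_fun x powr q \<partial>M) + q * y * (\<integral>x. \<phi> x * max_fun x powr (q - 1) \<partial>M)
          - y powr q * (\<integral>x. \<phi> x powr q \<partial>M)) / \<kappa>"
    using integrable_max_fun_powr integrable_phi_max_fun_powr assms(1) by simp
  finally show ?thesis .
qed

end

text \<open>If \<open>A n \<rightarrow> h y\<^sup>q\<close>, the bound on \<open>(1 - q) A n + q B n\<close> makes the tangent-gap term in the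
  upper estimate at most an affine function of \<open>A n\<close> vanishing at \<open>h y\<^sup>q\<close> (this is where
  \<open>f\<^sup>q = h H(y)\<close> enters), while \<open>\<delta>\<close> can be taken arbitrarily small.\<close>
lemma tendsto_iff_deviation_tendsto_0:
  fixes A B Q :: "nat \<Rightarrow> real" and q h f y :: real
  assumes q: "0 < q" "q < 1" and "1 \<le> y" and extremal: "f powr q = h * H_fun q y"
    and lower: "\<And>n. \<bar>A n - h * y powr q\<bar> \<le> Q n"
    and upper: "\<And>\<delta>. 0 < \<delta> \<Longrightarrow> \<delta> < 1 \<Longrightarrow> \<exists>\<kappa>>0. \<forall>n.
      Q n \<le> \<delta> powr q * A n + ((1 - q) * A n + q * y * B n - y powr q * h) / \<kappa>"
    and bellman: "\<And>n. (1 - q) * A n + q * B n \<le> f powr q"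
    and "\<And>n. 0 \<le> B n" "\<And>n. 0 \<le> Q n"
  shows "(A \<longlonglongrightarrow> h * y powr q) \<longleftrightarrow> (Q \<longlonglongrightarrow> 0)"
proof
  assume "Q \<longlonglongrightarrow> 0"
  then have "(\<lambda>n. A n - h * y powr q) \<longlonglongrightarrow> 0"
    by (rule Lim_null_comparison[rotated]) (use lower in auto)
  then show "A \<longlonglongrightarrow> h * y powr q" by (simp add: LIM_zero_iff)
next
  assume A: "A \<longlonglongrightarrow> h * y powr q"
  define K where "K = f powr q / (1 - q) + 1"
  have "0 < K" using q by (simp add: K_def add_nonneg_pos)
  have A_less_K: "A n < K" for n
  proof -
    have "(1 - q) * A n \<le> f powr q"
      using bellman[of n] mult_nonneg_nonneg[OF _ \<open>0 \<le> B n\<close>, of q] q by linarith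
    then show ?thesis using q by (simp add: K_def field_simps)
  qed
  define E where "E a = (1 - q) * a + y * (f powr q - (1 - q) * a) - y powr q * h" for a
  have E_zero: "E (h * y powr q) = 0"
    using \<open>1 \<le> y\<close> powr_add[of y 1 "q - 1"]
    by (simp add: E_def extremal H_fun_def algebra_simps)
  have E_A: "(\<lambda>n. E (A n)) \<longlonglongrightarrow> 0"
    unfolding E_zero[symmetric] E_def by (intro tendsto_intros A)
  have gap_le_E: "(1 - q) * A n + q * y * B n - y powr q * h \<le> E (A n)" for n
    using mult_left_mono[of "q * B n" "f powr q - (1 - q) * A n" y] bellman[of n] \<open>1 \<le> y\<close>
    by (simp add: E_def algebra_simps)
  show "Q \<longlonglongrightarrow> 0"
  proof (rule LIMSEQ_I)
    fix \<epsilon> :: real assume "0 < \<epsilon>"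
    define \<delta> where "\<delta> = min (1 / 2) ((\<epsilon> / (2 * K)) powr (1 / q))"
    have \<delta>: "0 < \<delta>" "\<delta> < 1" using \<open>0 < \<epsilon>\<close> \<open>0 < K\<close> by (auto simp: \<delta>_def)
    have "\<delta> powr q \<le> ((\<epsilon> / (2 * K)) powr (1 / q)) powr q"
      using \<delta> q by (intro powr_mono2) (auto simp: \<delta>_def)
    also have "\<dots> = \<epsilon> / (2 * K)" using q \<open>0 < \<epsilon>\<close> \<open>0 < K\<close> by (simp add: powr_powr)
    finally have \<delta>K: "\<delta> powr q * K \<le> \<epsilon> / 2" using \<open>0 < K\<close> by (simp add: field_simps)
    obtain \<kappa> where "0 < \<kappa>"
      and Q_le: "\<And>n. Q n \<le> \<delta> powr q * A n + ((1 - q) * A n + q * y * B n - y powr q * h) / \<kappa>"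
      using upper[OF \<delta>] by blast
    obtain N where N: "\<And>n. N \<le> n \<Longrightarrow> \<bar>E (A n)\<bar> < \<kappa> * \<epsilon> / 2"
      using LIMSEQ_D[OF E_A, of "\<kappa> * \<epsilon> / 2"] \<open>0 < \<kappa>\<close> \<open>0 < \<epsilon>\<close> by auto
    have "\<bar>Q n\<bar> < \<epsilon>" if "N \<le> n" for n
    proof -
      have "\<delta> powr q * A n \<le> \<delta> powr q * K" using A_less_K[of n] by (intro mult_left_mono) auto
      moreover have "((1 - q) * A n + q * y * B n - y powr q * h) / \<kappa> < \<epsilon> / 2"
        using gap_le_E[of n] N[OF that] \<open>0 < \<kappa>\<close> by (simp add: field_simps)
      ultimately have "Q n < \<epsilon>" using Q_le[of n] \<delta>K by linarith
      then show ?thesis using \<open>0 \<le> Q n\<close> by simp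
    qed
    then show "\<exists>N. \<forall>n\<ge>N. norm (Q n - 0) < \<epsilon>" by auto
  qed
qed

lemma is_tree_dyadic_tree:
  assumes "prob_space M" "is_tree M T"
  obtains C where "dyadic_tree M C T"
proof -
  from assms(2) obtain C where "T \<subseteq> sets M" "\<forall>I\<in>T. 0 < measure M I"
    "\<forall>I\<in>T. C I \<subseteq> T \<and> countable (C I) \<and> (\<exists>J\<in>C I. \<exists>K\<in>C I. J \<noteq> K) \<and> disjoint (C I) \<and> \<Union>(C I) = I"
    "T = (\<Union>m. tree_level M C m)"
    unfolding is_tree_def by blast
  then have "dyadic_tree M C T"
    using assms(1) unfolding dyadic_tree_def dyadic_tree_axioms_def by blast
  then show thesis by (rule that)
qed

lemma dyadic_max_deviation_iff:
  fixes \<phi> :: "nat \<Rightarrow> 'a \<Rightarrow> real"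
  assumes tf: "\<And>n. tree_function M C T (\<phi> n) q"
    and mean: "\<And>n. (\<integral>x. \<phi> n x \<partial>M) = f"
    and int_powr: "\<And>n. integrable M (\<lambda>x. \<phi> n x powr q)"
    and powr_mean: "\<And>n. (\<integral>x. \<phi> n x powr q \<partial>M) = h"
    and "1 \<le> y" and extremal: "f powr q = h * H_fun q y"
  shows "((\<lambda>n. \<integral>\<^sup>+ x. epowr (dyadic_max M T (\<phi> n) x) q \<partial>M) \<longlonglongrightarrow> ennreal (h * y powr q))
     \<longleftrightarrow> ((\<lambda>n. \<integral>\<^sup>+ x. (if dyadic_max M T (\<phi> n) x = \<infinity> then \<infinity>
                else ennreal (\<bar>enn2real (dyadic_max M T (\<phi> n) x) - y * \<phi> n x\<bar> powr q)) \<partial>M)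
            \<longlonglongrightarrow> 0)"
proof -
  have q: "0 < q" "q < 1" using tree_function.q_pos tree_function.q_less_1 tf by blast+
  define A where "A n = (\<integral>x. enn2real (dyadic_max M T (\<phi> n) x) powr q \<partial>M)" for n
  define B where "B n = (\<integral>x. \<phi> n x * enn2real (dyadic_max M T (\<phi> n) x) powr (q - 1) \<partial>M)" for n
  define Q where "Q n = (\<integral>x. \<bar>enn2real (dyadic_max M T (\<phi> n) x) - y * \<phi> n x\<bar> powr q \<partial>M)" for n
  have "0 \<le> A n" "0 \<le> B n" "0 \<le> Q n" for n
    unfolding A_def B_def Q_def using tree_function.phi_nonneg[OF tf]
    by (auto intro!: integral_nonneg_AE AE_I2)
  have "(A \<longlonglongrightarrow> h * y powr q) \<longleftrightarrow> (Q \<longlonglongrightarrow> 0)"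
  proof (rule tendsto_iff_deviation_tendsto_0[OF q \<open>1 \<le> y\<close> extremal])
    show "\<bar>A n - h * y powr q\<bar> \<le> Q n" for n
      using tree_function.abs_integral_max_fun_powr_diff_le[OF tf int_powr, of y] assms \<open>1 \<le> y\<close>
      by (simp add: A_def Q_def mult.commute)
    show "(1 - q) * A n + q * B n \<le> f powr q" for n
      using tree_function.maximal_tangent_inequality[OF tf] by (simp add: A_def B_def mean)
    show "\<exists>\<kappa>>0. \<forall>n. Q n \<le> \<delta> powr q * A n + ((1 - q) * A n + q * y * B n - y powr q * h) / \<kappa>"
      if \<delta>: "0 < \<delta>" "\<delta> < 1" for \<delta>
    proof -
      obtain \<kappa> where "0 < \<kappa>" "\<forall>r\<ge>0. \<bar>1 - r\<bar> powr q \<le> \<delta> powr q + tangent_gap q r / \<kappa>"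
        using tangent_gap_stability[OF q \<delta>] by blast
      then show ?thesis
        using tree_function.deviation_le_tangent_gap[OF tf int_powr, of y \<kappa> \<delta>] assms \<open>1 \<le> y\<close>
        by (auto simp: A_def B_def Q_def mult.commute)
    qed
  qed fact+
  moreover have "(\<integral>\<^sup>+ x. epowr (dyadic_max M T (\<phi> n) x) q \<partial>M) = ennreal (A n)" for n
    unfolding A_def by (rule tree_function.nn_integral_epowr_dyadic_max[OF tf])
  moreover have "(\<integral>\<^sup>+ x. (if dyadic_max M T (\<phi> n) x = \<infinity> then \<infinity>
      else ennreal (\<bar>enn2real (dyadic_max M T (\<phi> n) x) - y * \<phi> n x\<bar> powr q)) \<partial>M) = ennreal (Q n)" for n
    unfolding Q_def using \<open>1 \<le> y\<close> by (intro tree_function.nn_integral_deviation[OF tf int_powr]) simp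
  moreover have "0 \<le> h" using powr_mean[of 0] by (metis integral_nonneg_AE AE_I2 powr_ge_zero)
  ultimately show ?thesis
    using \<open>\<And>n. 0 \<le> A n\<close> \<open>\<And>n. 0 \<le> Q n\<close>
    by (simp add: tendsto_ennreal_iff flip: ennreal_0)
qed

theorem theorem2:
  fixes M :: "'a measure" and T :: "'a set set" and q f h c :: real
    and \<phi> :: "nat \<Rightarrow> 'a \<Rightarrow> real"
  assumes "prob_space M" and "non_atomic M" and "is_tree M T"
    and "0 < q" and "q < 1"
    and "0 < h" and "h \<le> f powr q"
    and "\<And>n. \<phi> n \<in> borel_measurable M"
    and "\<And>n x. x \<in> space M \<Longrightarrow> 0 \<le> \<phi> n x"
    and "\<And>n. integrable M (\<phi> n)" and "\<And>n. (\<integral>x. \<phi> n x \<partial>M) = f"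
    and "\<And>n. integrable M (\<lambda>x. \<phi> n x powr q)" and "\<And>n. (\<integral>x. \<phi> n x powr q \<partial>M) = h"
    and "c = omega q (f powr q / h) powr (1 / q)"
  shows "((\<lambda>n. \<integral>\<^sup>+ x. epowr (dyadic_max M T (\<phi> n) x) q \<partial>M)
            \<longlonglongrightarrow> ennreal (h * omega q (f powr q / h)))
     \<longleftrightarrow> ((\<lambda>n. \<integral>\<^sup>+ x. (if dyadic_max M T (\<phi> n) x = \<infinity> then \<infinity>
                else ennreal (\<bar>enn2real (dyadic_max M T (\<phi> n) x) - c * \<phi> n x\<bar> powr q)) \<partial>M)
            \<longlonglongrightarrow> 0)"
proof -
  obtain C where "dyadic_tree M C T" using is_tree_dyadic_tree assms(1,3) by blast
  have "0 \<le> f"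
    unfolding assms(11)[of 0, symmetric] using assms(9) by (intro integral_nonneg_AE AE_I2) auto
  then have "0 < f" using assms(6,7) by (cases "f = 0") auto
  then have tf: "tree_function M C T (\<phi> n) q" for n
    using \<open>dyadic_tree M C T\<close> assms by (simp add: tree_function_def tree_function_axioms_def)
  define y where "y = H_inv q (f powr q / h)"
  have "1 \<le> f powr q / h" using assms(6,7) by simp
  then have "1 \<le> y" and extremal: "f powr q = h * H_fun q y"
    using H_inv_ge_1 H_fun_H_inv assms(4,5,6) by (simp_all add: y_def)
  have omega_c: "omega q (f powr q / h) = y powr q" "c = y"
    using assms(4,14) \<open>1 \<le> y\<close> by (simp_all add: omega_def y_def powr_powr)
  show ?thesis
    unfolding omega_c
    using dyadic_max_deviation_iff[where \<phi> = \<phi>, OF tf assms(11-13) \<open>1 \<le> y\<close> extremal] .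
qed

end
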